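(* For every restriction category $\mathbb{X}$, the category $\mathbf{L}[\mathbb{X}]$ with the assignment $\mathsf{L}(A,a)=(A,\mathrm{id}_A)$ and $\eta_{(A,a)}=a:(A,a)\to(A,\mathrm{id}_A)$ is a local category.
   Context: Composition is diagrammatic ($fg$ = first $f$ then $g$). A restriction category is a category $\mathbb{X}$ with an assignment to each $f:A\to B$ of $\bar f:A\to A$ such that: $\bar ff=f$; $\bar f\bar g=\bar g\bar f$ and $\bar g\bar f=\overline{\bar gf}$ for $f:A\to B$, $g:A\to C$; $f\bar g=\overline{fg}f$ for $f:A\to B$, $g:B\to C$. A restriction idempotent is $a:A\to A$ with $a=\bar a$. $\mathbf{L}[\mathbb{X}]$ is the category whose objects are pairs $(A,a)$ with $a$ a restriction idempotent on $A$, whose morphisms $f:(A,a)\to(B,b)$ are morphisms $f:A\to B$ of $\mathbb{X}$ with $\bar f=a$ and $fb=f$, with identity on $(A,a)$ given by $a$ and composition as in $\mathbb{X}$. A local category is a category $\mathbb{C}$ with, for each object $M$, an object $\mathsf{L}M$ and a morphism $\eta_M:M\to\mathsf{L}M$ such that (L.1) $\mathsf{L}\mathsf{L}M=\mathsf{L}M$ and $\eta_{\mathsf{L}M}=\mathrm{id}_{\mathsf{L}M}$; (L.2) each $\eta_M$ is monic; (L.3) for every $M$ and every morphism $f:N\to\mathsf{L}M$ a pullback of $\eta_M$ along $f$ exists, with leg $m:P\to N$, such that $\mathsf{L}P=\mathsf{L}N$ and $m\eta_N=\eta_P$. *)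

theory Defs
  imports Main
begin

text \<open>Categories presented by hom-sets (arrows may lie in several hom-sets, which
  is needed for L[X] where a morphism (A,a) -> (B,b) is an X-arrow f with
  conditions depending on the typing).  Composition is diagrammatic:
  cat_comp C f g means first f then g.\<close>

record ('o, 'm) cat =
  cat_obj  :: "'o set"
  cat_hom  :: "'o \<Rightarrow> 'o \<Rightarrow> 'm set"
  cat_id   :: "'o \<Rightarrow> 'm"
  cat_comp :: "'m \<Rightarrow> 'm \<Rightarrow> 'm"

definition category :: "('o, 'm) cat \<Rightarrow> bool" where
  "category C \<longleftrightarrow>
     (\<forall>A B f. f \<in> cat_hom C A B \<longrightarrow> A \<in> cat_obj C \<and> B \<in> cat_obj C) \<and>
     (\<forall>A \<in> cat_obj C. cat_id C A \<in> cat_hom C A A) \<and>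
     (\<forall>A B D f g. f \<in> cat_hom C A B \<longrightarrow> g \<in> cat_hom C B D \<longrightarrow>
        cat_comp C f g \<in> cat_hom C A D) \<and>
     (\<forall>A B D E f g h. f \<in> cat_hom C A B \<longrightarrow> g \<in> cat_hom C B D \<longrightarrow> h \<in> cat_hom C D E \<longrightarrow>
        cat_comp C (cat_comp C f g) h = cat_comp C f (cat_comp C g h)) \<and>
     (\<forall>A B f. f \<in> cat_hom C A B \<longrightarrow>
        cat_comp C (cat_id C A) f = f \<and> cat_comp C f (cat_id C B) = f)"

definition restriction_category :: "('o, 'm) cat \<Rightarrow> ('m \<Rightarrow> 'm) \<Rightarrow> bool" where
  "restriction_category X rst \<longleftrightarrow> category X \<and>
     (\<forall>A B f. f \<in> cat_hom X A B \<longrightarrow> rst f \<in> cat_hom X A A) \<and>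
     (\<forall>A B f. f \<in> cat_hom X A B \<longrightarrow> cat_comp X (rst f) f = f) \<and>
     (\<forall>A B D f g. f \<in> cat_hom X A B \<longrightarrow> g \<in> cat_hom X A D \<longrightarrow>
        cat_comp X (rst f) (rst g) = cat_comp X (rst g) (rst f) \<and>
        cat_comp X (rst g) (rst f) = rst (cat_comp X (rst g) f)) \<and>
     (\<forall>A B D f g. f \<in> cat_hom X A B \<longrightarrow> g \<in> cat_hom X B D \<longrightarrow>
        cat_comp X f (rst g) = cat_comp X (rst (cat_comp X f g)) f)"

definition Lcat :: "('o, 'm) cat \<Rightarrow> ('m \<Rightarrow> 'm) \<Rightarrow> ('o \<times> 'm, 'm) cat" where
  "Lcat X rst =
    (let Ob = {(A, a). A \<in> cat_obj X \<and> a \<in> cat_hom X A A \<and> rst a = a} in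
     \<lparr> cat_obj = Ob,
       cat_hom = (\<lambda>(A, a) (B, b). {f. (A, a) \<in> Ob \<and> (B, b) \<in> Ob \<and> f \<in> cat_hom X A B
                                       \<and> rst f = a \<and> cat_comp X f b = f}),
       cat_id = (\<lambda>(A, a). a),
       cat_comp = cat_comp X \<rparr>)"

definition monic :: "('o, 'm) cat \<Rightarrow> 'o \<Rightarrow> 'o \<Rightarrow> 'm \<Rightarrow> bool" where
  "monic C M N e \<longleftrightarrow> e \<in> cat_hom C M N \<and>
     (\<forall>P g h. g \<in> cat_hom C P M \<longrightarrow> h \<in> cat_hom C P M \<longrightarrow>
        cat_comp C g e = cat_comp C h e \<longrightarrow> g = h)"

definition is_pullback ::
  "('o, 'm) cat \<Rightarrow> 'o \<Rightarrow> 'o \<Rightarrow> 'o \<Rightarrow> 'm \<Rightarrow> 'm \<Rightarrow> 'o \<Rightarrow> 'm \<Rightarrow> 'm \<Rightarrow> bool" where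
  "is_pullback C M N K e f P m n \<longleftrightarrow>
     P \<in> cat_obj C \<and> m \<in> cat_hom C P N \<and> n \<in> cat_hom C P M \<and>
     cat_comp C m f = cat_comp C n e \<and>
     (\<forall>Q x y. x \<in> cat_hom C Q N \<longrightarrow> y \<in> cat_hom C Q M \<longrightarrow>
        cat_comp C x f = cat_comp C y e \<longrightarrow>
        (\<exists>!u. u \<in> cat_hom C Q P \<and> cat_comp C u m = x \<and> cat_comp C u n = y))"

definition local_category :: "('o, 'm) cat \<Rightarrow> ('o \<Rightarrow> 'o) \<Rightarrow> ('o \<Rightarrow> 'm) \<Rightarrow> bool" where
  "local_category C L \<eta> \<longleftrightarrow> category C \<and>
     (\<forall>M \<in> cat_obj C. L M \<in> cat_obj C \<and> \<eta> M \<in> cat_hom C M (L M)) \<and>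
     \<comment> \<open>(L.1)\<close>
     (\<forall>M \<in> cat_obj C. L (L M) = L M \<and> \<eta> (L M) = cat_id C (L M)) \<and>
     \<comment> \<open>(L.2)\<close>
     (\<forall>M \<in> cat_obj C. monic C M (L M) (\<eta> M)) \<and>
     \<comment> \<open>(L.3)\<close>
     (\<forall>M \<in> cat_obj C. \<forall>N \<in> cat_obj C. \<forall>f. f \<in> cat_hom C N (L M) \<longrightarrow>
        (\<exists>P m n. is_pullback C M N (L M) (\<eta> M) f P m n \<and>
                 L P = L N \<and> cat_comp C m (\<eta> N) = \<eta> P))"

end

theory Submission
  imports Defs
begin

text \<open>Every arrow \<open>y : (C, c) \<rightarrow> (A, a)\<close> of L[X] satisfies \<open>y a = y\<close>; this makes
  \<open>\<eta> = a\<close> monic and drives the whole proof.  The pullback of \<open>a : (A, a) \<rightarrow> (A, 1)\<close> along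
  \<open>f : (B, b) \<rightarrow> (A, 1)\<close> is the restriction idempotent \<open>e = rst (f a)\<close> on \<open>B\<close>, with
  legs \<open>e : (B, e) \<rightarrow> (B, b)\<close> and \<open>f a : (B, e) \<rightarrow> (A, a)\<close>.  For a cone \<open>x, y\<close> with
  \<open>x f = y a\<close> we get \<open>x f a = y\<close>, hence \<open>rst (x f a) = rst y = rst x\<close> and therefore
  \<open>x e = x\<close>: the leg \<open>x\<close> itself is the mediating arrow, and it is unique because any
  mediating \<open>u\<close> satisfies \<open>u = u e = x\<close>.\<close>

lemma Lcat_obj:
  "cat_obj (Lcat X rst) = {(A, a). A \<in> cat_obj X \<and> a \<in> cat_hom X A A \<and> rst a = a}"
  by (simp add: Lcat_def Let_def)

lemma Lcat_hom_iff:
  "f \<in> cat_hom (Lcat X rst) (A, a) (B, b) \<longleftrightarrow>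
     (A, a) \<in> cat_obj (Lcat X rst) \<and> (B, b) \<in> cat_obj (Lcat X rst) \<and>
     f \<in> cat_hom X A B \<and> rst f = a \<and> cat_comp X f b = f"
  by (simp add: Lcat_def Let_def)

lemma Lcat_id: "cat_id (Lcat X rst) (A, a) = a"
  by (simp add: Lcat_def Let_def)

lemma Lcat_comp: "cat_comp (Lcat X rst) = cat_comp X"
  by (simp add: Lcat_def Let_def)

locale restriction_cat =
  fixes X :: "('o, 'm) cat" and rst :: "'m \<Rightarrow> 'm"
  assumes restriction_category: "restriction_category X rst"
begin

abbreviation comp (infixl "\<cdot>" 70) where "f \<cdot> g \<equiv> cat_comp X f g"

lemma id_hom: "A \<in> cat_obj X \<Longrightarrow> cat_id X A \<in> cat_hom X A A"
  using restriction_category unfolding restriction_category_def category_def by (elim conjE) fast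

lemma comp_hom: "f \<in> cat_hom X A B \<Longrightarrow> g \<in> cat_hom X B D \<Longrightarrow> f \<cdot> g \<in> cat_hom X A D"
  using restriction_category unfolding restriction_category_def category_def by (elim conjE) fast

lemma comp_assoc:
  "f \<in> cat_hom X A B \<Longrightarrow> g \<in> cat_hom X B D \<Longrightarrow> h \<in> cat_hom X D E \<Longrightarrow>
     (f \<cdot> g) \<cdot> h = f \<cdot> (g \<cdot> h)"
  using restriction_category unfolding restriction_category_def category_def by (elim conjE) fast

lemma comp_id_right: "f \<in> cat_hom X A B \<Longrightarrow> f \<cdot> cat_id X B = f"
  using restriction_category unfolding restriction_category_def category_def by (elim conjE) fast

lemma rst_hom: "f \<in> cat_hom X A B \<Longrightarrow> rst f \<in> cat_hom X A A"
  using restriction_category unfolding restriction_category_def by (elim conjE) fast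

lemma rst_comp_self: "f \<in> cat_hom X A B \<Longrightarrow> rst f \<cdot> f = f"
  using restriction_category unfolding restriction_category_def by (elim conjE) fast

lemma rst_commute:
  "f \<in> cat_hom X A B \<Longrightarrow> g \<in> cat_hom X A D \<Longrightarrow> rst f \<cdot> rst g = rst g \<cdot> rst f"
  using restriction_category unfolding restriction_category_def by (elim conjE) fast

lemma rst_comp_rst:
  "f \<in> cat_hom X A B \<Longrightarrow> g \<in> cat_hom X A D \<Longrightarrow> rst g \<cdot> rst f = rst (rst g \<cdot> f)"
  using restriction_category unfolding restriction_category_def by (elim conjE) fast

lemma comp_rst:
  "f \<in> cat_hom X A B \<Longrightarrow> g \<in> cat_hom X B D \<Longrightarrow> f \<cdot> rst g = rst (f \<cdot> g) \<cdot> f"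
  using restriction_category unfolding restriction_category_def by (elim conjE) fast

lemma rst_id: "A \<in> cat_obj X \<Longrightarrow> rst (cat_id X A) = cat_id X A"
  by (metis comp_id_right id_hom rst_comp_self rst_hom)

lemma rst_idem: "rst a = a \<Longrightarrow> a \<in> cat_hom X A A \<Longrightarrow> a \<cdot> a = a"
  by (metis rst_comp_self)

lemma rst_rst:
  assumes f: "f \<in> cat_hom X A B"
  shows "rst (rst f) = rst f"
proof -
  have rst_f: "rst f \<in> cat_hom X A A" using rst_hom[OF f] .
  have "rst f \<cdot> rst f = rst f"
    using rst_comp_rst[OF f f] rst_comp_self[OF f] by simp
  then have "rst (rst f) = rst f \<cdot> rst (rst f)"
    using rst_comp_rst[OF rst_f f] by simp
  also have "\<dots> = rst (rst f) \<cdot> rst f"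
    using rst_commute[OF f rst_f] by simp
  also have "\<dots> = rst f"
    using rst_comp_self[OF rst_f] .
  finally show ?thesis .
qed

lemma rst_comp_absorb:
  assumes f: "f \<in> cat_hom X A B" and g: "g \<in> cat_hom X B D"
  shows "rst (f \<cdot> g) \<cdot> rst f = rst (f \<cdot> g)"
proof -
  have fg: "f \<cdot> g \<in> cat_hom X A D" using comp_hom[OF f g] .
  have "rst (f \<cdot> g) \<cdot> rst f = rst (rst f \<cdot> (f \<cdot> g))"
    using rst_commute[OF fg f] rst_comp_rst[OF fg f] by simp
  also have "rst f \<cdot> (f \<cdot> g) = f \<cdot> g"
    using comp_assoc[OF rst_hom[OF f] f g] rst_comp_self[OF f] by simp
  finally show ?thesis .
qed

lemma rst_comp_total:
  assumes f: "f \<in> cat_hom X A B" and g: "g \<in> cat_hom X B D" and f_rst_g: "f \<cdot> rst g = f"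
  shows "rst (f \<cdot> g) = rst f"
proof -
  have "rst (f \<cdot> g) \<cdot> f = f" using comp_rst[OF f g] f_rst_g by simp
  then have "rst f = rst (rst (f \<cdot> g) \<cdot> f)" by simp
  also have "\<dots> = rst (f \<cdot> g) \<cdot> rst f" using rst_comp_rst[OF f comp_hom[OF f g]] by simp
  also have "\<dots> = rst (f \<cdot> g)" using rst_comp_absorb[OF f g] .
  finally show ?thesis by simp
qed

abbreviation L where "L \<equiv> Lcat X rst"

lemma Lcat_hom_objs: "f \<in> cat_hom L M N \<Longrightarrow> M \<in> cat_obj L \<and> N \<in> cat_obj L"
  by (cases M; cases N) (simp add: Lcat_hom_iff)

lemma category_Lcat: "category L"
  unfolding category_def
proof (intro conjI allI impI ballI)
  fix M assume "M \<in> cat_obj L"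
  then show "cat_id L M \<in> cat_hom L M M"
    by (cases M) (auto simp: Lcat_hom_iff Lcat_obj Lcat_id rst_idem)
next
  fix M N K f g assume "f \<in> cat_hom L M N" "g \<in> cat_hom L N K"
  then show "cat_comp L f g \<in> cat_hom L M K"
    by (cases M; cases N; cases K)
      (auto simp: Lcat_hom_iff Lcat_comp Lcat_obj comp_hom rst_comp_total comp_assoc)
next
  fix M N K K' f g h assume "f \<in> cat_hom L M N" "g \<in> cat_hom L N K" "h \<in> cat_hom L K K'"
  then show "cat_comp L (cat_comp L f g) h = cat_comp L f (cat_comp L g h)"
    by (cases M; cases N; cases K; cases K') (auto simp: Lcat_hom_iff Lcat_comp comp_assoc)
next
  fix M N f assume "f \<in> cat_hom L M N"
  then show "cat_comp L (cat_id L M) f = f" and "cat_comp L f (cat_id L N) = f"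
    by (cases M; cases N; auto simp: Lcat_hom_iff Lcat_comp Lcat_id rst_comp_self)+
qed (use Lcat_hom_objs in blast)+

lemma Lcat_total_obj: "(A, a) \<in> cat_obj L \<Longrightarrow> (A, cat_id X A) \<in> cat_obj L"
  by (auto simp: Lcat_obj id_hom rst_id)

lemma Lcat_unit_hom: "(A, a) \<in> cat_obj L \<Longrightarrow> a \<in> cat_hom L (A, a) (A, cat_id X A)"
  by (auto simp: Lcat_hom_iff Lcat_obj id_hom rst_id comp_id_right)

lemma monic_Lcat_unit: "(A, a) \<in> cat_obj L \<Longrightarrow> monic L (A, a) (A, cat_id X A) a"
  unfolding monic_def
proof (intro conjI allI impI)
  fix P g h
  assume "g \<in> cat_hom L P (A, a)" "h \<in> cat_hom L P (A, a)" "cat_comp L g a = cat_comp L h a"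
  then show "g = h"
    by (cases P) (simp add: Lcat_hom_iff Lcat_comp)
qed (rule Lcat_unit_hom)

lemma is_pullback_Lcat_unit:
  assumes M: "(A, a) \<in> cat_obj L" and N: "(B, b) \<in> cat_obj L"
    and f: "f \<in> cat_hom L (B, b) (A, cat_id X A)"
  defines "e \<equiv> rst (f \<cdot> a)"
  shows "is_pullback L (A, a) (B, b) (A, cat_id X A) a f (B, e) e (f \<cdot> a)"
    and "e \<cdot> b = e"
proof -
  from M N f have a: "a \<in> cat_hom X A A" "rst a = a" and b: "b \<in> cat_hom X B B" "rst b = b"
    and fX: "f \<in> cat_hom X B A" and rst_f: "rst f = b"
    by (auto simp: Lcat_hom_iff Lcat_obj)
  have fa: "f \<cdot> a \<in> cat_hom X B A" using comp_hom[OF fX a(1)] .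
  have e: "e \<in> cat_hom X B B" "rst e = e"
    unfolding e_def using rst_hom[OF fa] rst_rst[OF fa] .
  show e_b: "e \<cdot> b = e"
    unfolding e_def using rst_comp_absorb[OF fX a(1)] rst_f by simp
  have fa_a: "f \<cdot> a \<cdot> a = f \<cdot> a"
    using comp_assoc[OF fX a(1) a(1)] rst_idem[OF a(2,1)] by simp
  have P: "(B, e) \<in> cat_obj L" using N e by (simp add: Lcat_obj)
  show "is_pullback L (A, a) (B, b) (A, cat_id X A) a f (B, e) e (f \<cdot> a)"
    unfolding is_pullback_def Lcat_comp
  proof (intro conjI allI impI)
    show "e \<in> cat_hom L (B, e) (B, b)" using P N e e_b by (simp add: Lcat_hom_iff)
    show "f \<cdot> a \<in> cat_hom L (B, e) (A, a)" using P M fa fa_a by (simp add: Lcat_hom_iff e_def)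
    show "e \<cdot> f = f \<cdot> a \<cdot> a" using comp_rst[OF fX a(1)] a(2) fa_a by (simp add: e_def)
  next
    fix Q x y
    assume x: "x \<in> cat_hom L Q (B, b)" and y: "y \<in> cat_hom L Q (A, a)" and cone: "x \<cdot> f = y \<cdot> a"
    obtain C c where Q: "Q = (C, c)" by (cases Q)
    from x y have xX: "x \<in> cat_hom X C B" and rst_x: "rst x = c"
      and rst_y: "rst y = c" and y_a: "y \<cdot> a = y"
      by (auto simp: Q Lcat_hom_iff)
    have x_fa: "x \<cdot> (f \<cdot> a) = y" using comp_assoc[OF xX fX a(1)] cone y_a by simp
    have x_e: "x \<cdot> e = x"
      unfolding e_def using comp_rst[OF xX fa] x_fa rst_x rst_y rst_comp_self[OF xX] by simp
    have "x \<in> cat_hom L Q (B, e)" using x x_e P by (simp add: Q Lcat_hom_iff)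
    then show "\<exists>!u. u \<in> cat_hom L Q (B, e) \<and> u \<cdot> e = x \<and> u \<cdot> (f \<cdot> a) = y"
      using x_e x_fa by (auto simp: Q Lcat_hom_iff)
  qed (fact P)
qed

end

theorem proposition4p3:
  fixes X :: "('o, 'm) cat" and rst :: "'m \<Rightarrow> 'm"
  assumes "restriction_category X rst"
  shows "local_category (Lcat X rst) (\<lambda>(A, a). (A, cat_id X A)) (\<lambda>(A, a). a)"
proof -
  interpret restriction_cat X rst using assms by unfold_locales
  have "\<exists>P m n. is_pullback L (A, a) (B, b) (A, cat_id X A) a f P m n \<and>
          fst P = B \<and> m \<cdot> b = snd P"
    if "(A, a) \<in> cat_obj L" "(B, b) \<in> cat_obj L" "f \<in> cat_hom L (B, b) (A, cat_id X A)"
    for A a B b f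
    using is_pullback_Lcat_unit[OF that] by fastforce
  then show ?thesis
    unfolding local_category_def
    by (auto simp: category_Lcat Lcat_total_obj Lcat_unit_hom monic_Lcat_unit Lcat_id Lcat_comp
        split: prod.splits)
qed

end
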